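(* Let $\kappa,\lambda,\mu,\ell\in\mathbb{R}$ and $F(R)=\bigl(h-\lambda R-\tfrac{\kappa}{2}R^2\bigr)^2-(R^2-\mu^2)(R-\ell)$. (i) Let $\mu=0$, $\ell<0$ (so $R_{\min}=0$). There exists $h\in\mathbb{R}$ such that $R=0$ is a root of $F$ of multiplicity at least three if and only if $\ell=-\lambda^2$ (with $\lambda\ne0$). In that case $h=0$ and $F(R)=R^3\bigl(\kappa\lambda-1+\tfrac{\kappa^2}{4}R\bigr)$, so $F'''(0)=6(\kappa\lambda-1)$. (ii) Let $\ell=|\mu|>0$ (so $R_{\min}=\ell$). There exists $h$ such that $R=\ell$ is a root of $F$ of multiplicity at least three if and only if $(\lambda+\kappa\ell)^2=2\ell$. In that case $h=\lambda\ell+\tfrac{\kappa}{2}\ell^2$ and $F(R)=(R-\ell)^3\bigl(\kappa(\lambda+\kappa\ell)-1+\tfrac{\kappa^2}{4}(R-\ell)\bigr)$, so $F'''(\ell)=6\bigl(\kappa(\lambda+\kappa\ell)-1\bigr)$. (iii) Consequently, for $\kappa\ne0$, the root $R_{\min}$ has multiplicity exactly four (degenerate Hamiltonian Hopf bifurcation) precisely at $(\lambda,\mu,\ell)=(1/\kappa,0,-1/\kappa^2)$ and $(\lambda,\mu,\ell)=(1/(2\kappa),\pm1/(2\kappa^2),1/(2\kappa^2))$. (iv) For $\kappa=1$: the Hamiltonian Hopf set with $\mu=0,\ell<0$ is $\{(\lambda,0,-\lambda^2):\lambda\ne0\}$, subcritical ($F'''(0)<0$) for $\lambda<1$ and supercritical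 ($F'''(0)>0$) for $\lambda>1$; the Hamiltonian Hopf set with $\ell=|\mu|>0$ consists of the points $(\lambda,\pm\ell,\ell)$ with $\lambda\le\tfrac12$ and $\ell=1-\lambda\pm\sqrt{1-2\lambda}>0$, where $F'''(\ell)=\pm6\sqrt{1-2\lambda}$, so the branch $\ell=1-\lambda-\sqrt{1-2\lambda}$ ($\lambda<\tfrac12$, $\lambda\neq0$) is subcritical and the branch $\ell=1-\lambda+\sqrt{1-2\lambda}$ ($\lambda<\tfrac12$) is supercritical, the two meeting at the degenerate point $(\tfrac12,\pm\tfrac12,\tfrac12)$.
   Context: $R_{\min}=\max(|\mu|,\ell)$. A Hamiltonian Hopf bifurcation of the reduced system (energy $\mathcal{H}_\lambda=X+\lambda R+\tfrac{\kappa}{2}R^2$ on $\mathcal{P}_{\mu\ell}=\{R\ge R_{\min},\,X^2+Y^2=(R^2-\mu^2)(R-\ell)\}$, which is singular at its tip $(R_{\min},0,0)$ exactly when $\ell=|\mu|$ or $\mu=0,\ell\le0$) is characterised by $F$ having a root of multiplicity at least three at $R=R_{\min}$; it is called supercritical if $F'''(R_{\min})>0$, subcritical if $F'''(R_{\min})<0$, and degenerate if $F'''(R_{\min})=0$. *)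

theory Defs
  imports "HOL-Computational_Algebra.Polynomial"
begin

definition Fpoly :: "real \<Rightarrow> real \<Rightarrow> real \<Rightarrow> real \<Rightarrow> real \<Rightarrow> real poly" where
  "Fpoly k lam mu l h = [:h, -lam, -k/2:]^2 - [:-(mu^2), 0, 1:] * [:-l, 1:]"

definition Rmin :: "real \<Rightarrow> real \<Rightarrow> real" where
  "Rmin mu l = max \<bar>mu\<bar> l"

definition third_deriv_at :: "real poly \<Rightarrow> real \<Rightarrow> real" where
  "third_deriv_at p x = poly ((pderiv ^^ 3) p) x"

end

theory Submission
  imports Defs
begin

text \<open>Substituting \<open>R = a + X\<close> turns \<open>F\<close> into a quartic in \<open>X\<close> with leading coefficient
  \<open>\<kappa>\<^sup>2/4\<close>, and the multiplicity of the root \<open>a\<close> is the number of vanishing low-order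
  coefficients. At \<open>a = R\<^sub>m\<^sub>i\<^sub>n\<close> both factors \<open>R\<^sup>2 - \<mu>\<^sup>2\<close> and \<open>R - \<ell>\<close> are nonnegative, so the
  constant and linear coefficients can only vanish at a singular tip, where they force the
  value of \<open>h\<close>; the \<open>X\<^sup>2\<close>-coefficient then gives the condition on \<open>\<lambda>\<close> and \<open>\<ell>\<close>. The
  \<open>X\<^sup>3\<close>-coefficient is \<open>F\<^sup>'\<^sup>'\<^sup>'(a)/6 = \<kappa>(\<lambda> + \<kappa>a) - 1\<close>, and its vanishing singles out the
  degenerate points.\<close>

lemma pcompose_shift_dvd_iff:
  fixes p q :: "'a::idom poly"
  shows "pcompose p [:-a, 1:] dvd pcompose q [:-a, 1:] \<longleftrightarrow> p dvd q"
proof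
  have undo: "pcompose (pcompose r [:-a, 1:]) [:a, 1:] = r" for r :: "'a poly"
    by (simp add: pcompose_assoc [symmetric] pcompose_pCons)
  assume "pcompose p [:-a, 1:] dvd pcompose q [:-a, 1:]"
  then obtain r where "pcompose q [:-a, 1:] = pcompose p [:-a, 1:] * r" by (elim dvdE)
  then have "q = p * pcompose r [:a, 1:]"
    by (metis undo pcompose_mult)
  then show "p dvd q" by simp
next
  assume "p dvd q"
  then show "pcompose p [:-a, 1:] dvd pcompose q [:-a, 1:]"
    by (metis dvdE dvd_triv_left pcompose_mult)
qed

lemma order_pcompose_shift:
  fixes p :: "'a::idom poly"
  shows "order a (pcompose p [:-a, 1:]) = order 0 p"
proof (cases "p = 0")
  case False
  then have nz: "pcompose p [:-a, 1:] \<noteq> 0"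
    by (simp add: pcompose_eq_0_iff)
  have shift_power: "pcompose ([:-0, 1:] ^ n) [:-a, 1:] = [:-a, 1:] ^ n" for n
    by (induction n) (simp_all add: pcompose_1 pcompose_mult pcompose_pCons)
  have "n \<le> order a (pcompose p [:-a, 1:]) \<longleftrightarrow> n \<le> order 0 p" for n
    using order_divides [of a n "pcompose p [:-a, 1:]"] order_divides [of 0 n p] nz False
    by (metis shift_power pcompose_shift_dvd_iff)
  then show ?thesis by (meson le_antisym order_refl)
qed (simp add: order_def)

lemma order_0_ge_iff:
  "p \<noteq> 0 \<Longrightarrow> n \<le> order 0 p \<longleftrightarrow> (\<forall>i<n. coeff p i = 0)"
  by (simp add: monom_1_dvd_iff [symmetric] monom_1_dvd_iff')

lemma order_0_eq_iff:
  assumes "p \<noteq> 0"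
  shows "order 0 p = n \<longleftrightarrow> (\<forall>i<n. coeff p i = 0) \<and> coeff p n \<noteq> 0"
  using order_0_ge_iff [OF assms, of n] order_0_ge_iff [OF assms, of "Suc n"]
  by (auto simp: less_Suc_eq)

lemma higher_pderiv_pcompose_shift:
  "(pderiv ^^ n) (pcompose p [:-a, 1:]) = pcompose ((pderiv ^^ n) p) [:-a, 1:]"
  by (induction n) (simp_all add: pderiv_pcompose pderiv_pCons)

lemma poly_higher_pderiv_0:
  fixes p :: "'a::{idom, semiring_char_0} poly"
  shows "poly ((pderiv ^^ n) p) 0 = fact n * coeff p n"
  by (simp add: poly_0_coeff_0 coeff_higher_pderiv pochhammer_fact)

text \<open>The coefficients of \<open>F(a + X)\<close> in \<open>X\<close>; \<open>g\<close> and \<open>-b\<close> are the value and slope of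
  \<open>h - \<lambda>R - \<kappa>/2 R\<^sup>2\<close> at \<open>R = a\<close>.\<close>
definition Fpoly_taylor :: "real \<Rightarrow> real \<Rightarrow> real \<Rightarrow> real \<Rightarrow> real \<Rightarrow> real \<Rightarrow> real poly" where
  "Fpoly_taylor k lam mu l h a =
     (let g = h - lam * a - k/2 * a^2; b = lam + k * a
      in [:g^2 - (a^2 - mu^2) * (a - l),
           - 2 * g * b - (a^2 - mu^2) - 2 * a * (a - l),
           b^2 - k * g - (3 * a - l),
           k * b - 1,
           k^2 / 4:])"

lemma Fpoly_eq_pcompose_taylor:
  "Fpoly k lam mu l h = pcompose (Fpoly_taylor k lam mu l h a) [:-a, 1:]"
  by (rule poly_eq_poly_eq_iff [THEN iffD1])
    (simp add: fun_eq_iff poly_pcompose Fpoly_def Fpoly_taylor_def Let_def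
      power2_eq_square field_simps)

lemma Fpoly_taylor_nonzero: "Fpoly_taylor k lam mu l h a \<noteq> 0"
proof
  assume "Fpoly_taylor k lam mu l h a = 0"
  then have "coeff (Fpoly_taylor k lam mu l h a) 3 = 0" "coeff (Fpoly_taylor k lam mu l h a) 4 = 0"
    by simp_all
  then show False by (simp add: Fpoly_taylor_def Let_def numeral_eq_Suc)
qed

lemma order_Fpoly: "order a (Fpoly k lam mu l h) = order 0 (Fpoly_taylor k lam mu l h a)"
  by (simp add: Fpoly_eq_pcompose_taylor [of _ _ _ _ _ a] order_pcompose_shift)

lemma order_Fpoly_ge_3_iff:
  "3 \<le> order a (Fpoly k lam mu l h) \<longleftrightarrow>
     (h - lam * a - k/2 * a^2)^2 = (a^2 - mu^2) * (a - l) \<and>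
     2 * (h - lam * a - k/2 * a^2) * (lam + k * a) + (a^2 - mu^2) + 2 * a * (a - l) = 0 \<and>
     (lam + k * a)^2 - k * (h - lam * a - k/2 * a^2) = 3 * a - l"
proof -
  let ?T = "Fpoly_taylor k lam mu l h a"
  have "3 \<le> order a (Fpoly k lam mu l h) \<longleftrightarrow>
      coeff ?T 0 = 0 \<and> coeff ?T 1 = 0 \<and> coeff ?T 2 = 0"
    by (auto simp: order_Fpoly order_0_ge_iff Fpoly_taylor_nonzero numeral_3_eq_3 numeral_2_eq_2
        less_Suc_eq)
  then show ?thesis
    by (simp add: Fpoly_taylor_def Let_def numeral_2_eq_2) (auto simp: algebra_simps)
qed

lemma order_Fpoly_eq_4_iff:
  assumes "k \<noteq> 0"
  shows "order a (Fpoly k lam mu l h) = 4 \<longleftrightarrow>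
    3 \<le> order a (Fpoly k lam mu l h) \<and> k * (lam + k * a) = 1"
  using assms
  by (auto simp add: order_Fpoly order_0_eq_iff order_0_ge_iff Fpoly_taylor_nonzero numeral_eq_Suc
      less_Suc_eq Fpoly_taylor_def Let_def)

lemma poly_Fpoly_of_order_ge_3:
  assumes "3 \<le> order a (Fpoly k lam mu l h)"
  shows "poly (Fpoly k lam mu l h) R = (R - a)^3 * (k * (lam + k * a) - 1 + k^2/4 * (R - a))"
proof -
  let ?T = "Fpoly_taylor k lam mu l h a"
  have "coeff ?T 0 = 0" "coeff ?T 1 = 0" "coeff ?T 2 = 0"
    using assms by (simp_all add: order_Fpoly order_0_ge_iff Fpoly_taylor_nonzero)
  then have "?T = [:0, 0, 0, k * (lam + k * a) - 1, k^2/4:]"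
    by (simp add: Fpoly_taylor_def Let_def numeral_2_eq_2)
  then show ?thesis
    by (simp add: Fpoly_eq_pcompose_taylor [of _ _ _ _ _ a] poly_pcompose field_simps
        power3_eq_cube power2_eq_square)
qed

lemma third_deriv_at_Fpoly:
  "third_deriv_at (Fpoly k lam mu l h) a = 6 * (k * (lam + k * a) - 1)"
proof -
  let ?T = "Fpoly_taylor k lam mu l h a"
  have "third_deriv_at (Fpoly k lam mu l h) a = poly ((pderiv ^^ 3) ?T) 0"
    by (simp add: third_deriv_at_def Fpoly_eq_pcompose_taylor [of _ _ _ _ _ a]
        higher_pderiv_pcompose_shift poly_pcompose)
  also have "\<dots> = 6 * coeff ?T 3"
    by (simp add: poly_higher_pderiv_0 fact_numeral)
  finally show ?thesis
    by (simp add: Fpoly_taylor_def Let_def numeral_3_eq_3)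
qed

lemma order_Fpoly_ge_3_at_origin_iff:
  "3 \<le> order 0 (Fpoly k lam 0 l h) \<longleftrightarrow> h = 0 \<and> l = - (lam^2)"
  by (auto simp: order_Fpoly_ge_3_iff)

lemma order_Fpoly_ge_3_at_tip_iff:
  assumes "mu^2 = l^2"
  shows "3 \<le> order l (Fpoly k lam mu l h) \<longleftrightarrow>
    h = lam * l + k/2 * l^2 \<and> (lam + k * l)^2 = 2 * l"
  using assms by (auto simp: order_Fpoly_ge_3_iff algebra_simps)

lemma ex_order_Fpoly_ge_3_at_tip_iff:
  assumes "l = \<bar>mu\<bar>"
  shows "(\<exists>h. 3 \<le> order l (Fpoly k lam mu l h)) \<longleftrightarrow> (lam + k * l)^2 = 2 * l"
  using assms by (auto simp: order_Fpoly_ge_3_at_tip_iff)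

lemma sq_add_eq_double_iff:
  fixes lam l :: real
  shows "(lam + l)^2 = 2 * l \<longleftrightarrow>
    lam \<le> 1/2 \<and> (l = 1 - lam + sqrt (1 - 2 * lam) \<or> l = 1 - lam - sqrt (1 - 2 * lam))"
proof -
  have "(lam + l)^2 = 2 * l \<longleftrightarrow> (l - (1 - lam))^2 = 1 - 2 * lam"
    by (auto simp: power2_eq_square algebra_simps)
  also have "\<dots> \<longleftrightarrow> 0 \<le> 1 - 2 * lam \<and> \<bar>l - (1 - lam)\<bar> = sqrt (1 - 2 * lam)"
  proof
    assume sq: "(l - (1 - lam))^2 = 1 - 2 * lam"
    show "0 \<le> 1 - 2 * lam \<and> \<bar>l - (1 - lam)\<bar> = sqrt (1 - 2 * lam)"
      using zero_le_power2 [of "l - (1 - lam)"] real_sqrt_abs [of "l - (1 - lam)"]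
      unfolding sq by simp
  next
    assume "0 \<le> 1 - 2 * lam \<and> \<bar>l - (1 - lam)\<bar> = sqrt (1 - 2 * lam)"
    then show "(l - (1 - lam))^2 = 1 - 2 * lam"
      using power2_abs [of "l - (1 - lam)"] by simp
  qed
  finally show ?thesis
    by (auto simp: abs_if)
qed

lemma ex_order_Fpoly_ge_3_at_tip_kappa_1_iff:
  assumes "l = \<bar>mu\<bar>"
  shows "(\<exists>h. 3 \<le> order l (Fpoly 1 lam mu l h)) \<longleftrightarrow>
    lam \<le> 1/2 \<and> (l = 1 - lam + sqrt (1 - 2 * lam) \<or> l = 1 - lam - sqrt (1 - 2 * lam))"
  using ex_order_Fpoly_ge_3_at_tip_iff [OF assms, of 1 lam] sq_add_eq_double_iff [of lam l]
  by simp

lemma order_Fpoly_ge_3_at_Rmin_imp_singular_tip: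
  assumes "3 \<le> order (Rmin mu l) (Fpoly k lam mu l h)"
  shows "Rmin mu l = 0 \<and> mu = 0 \<or> Rmin mu l = l \<and> mu^2 = l^2"
proof -
  define a where "a = Rmin mu l"
  define g where "g = h - lam * a - k/2 * a^2"
  have a: "\<bar>mu\<bar> \<le> a" "l \<le> a" "a = \<bar>mu\<bar> \<or> a = l"
    by (auto simp: a_def Rmin_def)
  have P: "a^2 - mu^2 \<ge> 0"
    using power_mono [OF a(1), of 2] by simp
  have "g^2 = (a^2 - mu^2) * (a - l)"
    and c1: "2 * g * (lam + k * a) + (a^2 - mu^2) + 2 * a * (a - l) = 0"
    using assms by (simp_all add: order_Fpoly_ge_3_iff a_def g_def)
  moreover have "(a^2 - mu^2) * (a - l) = 0"
    using a(3) by auto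
  ultimately have "g = 0"
    by simp
  with c1 have "(a^2 - mu^2) + 2 * a * (a - l) = 0"
    by simp
  moreover have "2 * a * (a - l) \<ge> 0"
    using a by simp
  ultimately have "mu^2 = a^2" and "a * (a - l) = 0"
    using P by linarith+
  then have "mu^2 = a^2" "a = 0 \<or> a = l"
    by auto
  then show ?thesis
    unfolding a_def by auto
qed

lemma ex_order_Fpoly_at_Rmin_eq_4_iff:
  fixes k lam mu l :: real
  assumes k: "k \<noteq> 0"
  shows "(\<exists>h. order (Rmin mu l) (Fpoly k lam mu l h) = 4) \<longleftrightarrow>
    (lam, mu, l) = (1 / k, 0, - 1 / k^2) \<or>
    (lam, mu, l) = (1 / (2 * k), 1 / (2 * k^2), 1 / (2 * k^2)) \<or>
    (lam, mu, l) = (1 / (2 * k), - 1 / (2 * k^2), 1 / (2 * k^2))"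
    (is "?degenerate \<longleftrightarrow> ?origin \<or> ?tip_pos \<or> ?tip_neg")
proof
  assume ?degenerate
  then obtain h where "order (Rmin mu l) (Fpoly k lam mu l h) = 4" ..
  then have triple: "3 \<le> order (Rmin mu l) (Fpoly k lam mu l h)"
    and cubic_vanishes: "k * (lam + k * Rmin mu l) = 1"
    using order_Fpoly_eq_4_iff [OF k] by auto
  from order_Fpoly_ge_3_at_Rmin_imp_singular_tip [OF triple]
  show "?origin \<or> ?tip_pos \<or> ?tip_neg"
  proof
    assume "Rmin mu l = 0 \<and> mu = 0"
    then have origin: "Rmin mu l = 0" "mu = 0" by auto
    have "l = - (lam^2)"
      using triple unfolding origin(1) unfolding origin(2)
      by (simp add: order_Fpoly_ge_3_at_origin_iff)
    moreover have "lam = 1 / k"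
      using cubic_vanishes origin k by (simp add: field_simps)
    ultimately show ?thesis
      using origin by (simp add: power_divide)
  next
    assume tip: "Rmin mu l = l \<and> mu^2 = l^2"
    with triple have "(lam + k * l)^2 = 2 * l"
      by (simp add: order_Fpoly_ge_3_at_tip_iff)
    moreover have "lam + k * l = 1 / k"
      using cubic_vanishes tip k by (simp add: field_simps)
    ultimately have "l = 1 / (2 * k^2)" and "lam = 1 / (2 * k)"
      using k by (simp_all add: power_divide field_simps power2_eq_square)
    moreover have "mu = l \<or> mu = - l"
      using tip by (simp add: power2_eq_iff)
    ultimately show ?thesis
      by auto
  qed
next
  assume "?origin \<or> ?tip_pos \<or> ?tip_neg"
  then show ?degenerate
  proof (rule disjE)
    assume ?origin
    then have v: "lam = 1 / k" "mu = 0" "l = - 1 / k^2"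
      by auto
    have "Rmin mu l = 0"
      using v by (simp add: Rmin_def)
    moreover have "3 \<le> order 0 (Fpoly k lam mu l 0)"
      unfolding v(2) by (simp add: order_Fpoly_ge_3_at_origin_iff v(1,3) power_divide)
    ultimately show ?thesis
      using order_Fpoly_eq_4_iff [OF k, of 0 lam mu l 0] v(1) k by auto
  next
    assume "?tip_pos \<or> ?tip_neg"
    then have v: "lam = 1 / (2 * k)" "\<bar>mu\<bar> = l" "l = 1 / (2 * k^2)"
      by auto
    have Rmin: "Rmin mu l = l" and tip: "mu^2 = l^2"
      using v(2) by (auto simp: Rmin_def)
    have b: "lam + k * l = 1 / k"
      using v(1,3) k by (simp add: field_simps power2_eq_square)
    then have "(lam + k * l)^2 = 2 * l"
      by (simp add: v(3) power_divide)
    then have "3 \<le> order l (Fpoly k lam mu l (lam * l + k/2 * l^2))"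
      by (simp add: order_Fpoly_ge_3_at_tip_iff [OF tip])
    then show ?thesis
      using order_Fpoly_eq_4_iff [OF k] b k Rmin by auto
  qed
qed

theorem mainTheorem6:
  shows
  \<comment> \<open>(i)\<close>
  "(\<forall>k lam l. l < 0 \<longrightarrow>
      ((\<exists>h. order 0 (Fpoly k lam 0 l h) \<ge> 3) \<longleftrightarrow> (l = - (lam^2) \<and> lam \<noteq> 0)) \<and>
      (\<forall>h. order 0 (Fpoly k lam 0 l h) \<ge> 3 \<longrightarrow>
          h = 0 \<and>
          (\<forall>R. poly (Fpoly k lam 0 l h) R = R^3 * (k * lam - 1 + k^2 / 4 * R)) \<and>
          third_deriv_at (Fpoly k lam 0 l h) 0 = 6 * (k * lam - 1)))
   \<and>
  \<comment> \<open>(ii)\<close>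
   (\<forall>k lam mu l. l = \<bar>mu\<bar> \<and> l > 0 \<longrightarrow>
      ((\<exists>h. order l (Fpoly k lam mu l h) \<ge> 3) \<longleftrightarrow> (lam + k * l)^2 = 2 * l) \<and>
      (\<forall>h. order l (Fpoly k lam mu l h) \<ge> 3 \<longrightarrow>
          h = lam * l + k / 2 * l^2 \<and>
          (\<forall>R. poly (Fpoly k lam mu l h) R =
                 (R - l)^3 * (k * (lam + k * l) - 1 + k^2 / 4 * (R - l))) \<and>
          third_deriv_at (Fpoly k lam mu l h) l = 6 * (k * (lam + k * l) - 1)))
   \<and>
  \<comment> \<open>(iii)\<close>
   (\<forall>k lam mu l. k \<noteq> 0 \<longrightarrow>
      ((\<exists>h. order (Rmin mu l) (Fpoly k lam mu l h) = 4) \<longleftrightarrow>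
        ((lam, mu, l) = (1 / k, 0, - 1 / k^2) \<or>
         (lam, mu, l) = (1 / (2 * k), 1 / (2 * k^2), 1 / (2 * k^2)) \<or>
         (lam, mu, l) = (1 / (2 * k), - 1 / (2 * k^2), 1 / (2 * k^2)))))
   \<and>
  \<comment> \<open>(iv), kappa = 1, family mu = 0, l < 0\<close>
   {(lam, mu, l). mu = 0 \<and> l < 0 \<and> (\<exists>h. order 0 (Fpoly 1 lam mu l h) \<ge> 3)}
      = {(lam, 0, - (lam^2)) | lam. lam \<noteq> 0}
   \<and>
   (\<forall>lam h. lam \<noteq> 0 \<longrightarrow> order 0 (Fpoly 1 lam 0 (- (lam^2)) h) \<ge> 3 \<longrightarrow>
      (lam < 1 \<longrightarrow> third_deriv_at (Fpoly 1 lam 0 (- (lam^2)) h) 0 < 0) \<and>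
      (lam > 1 \<longrightarrow> third_deriv_at (Fpoly 1 lam 0 (- (lam^2)) h) 0 > 0))
   \<and>
  \<comment> \<open>(iv), kappa = 1, family l = |mu| > 0\<close>
   {(lam, mu, l). l = \<bar>mu\<bar> \<and> l > 0 \<and> (\<exists>h. order l (Fpoly 1 lam mu l h) \<ge> 3)}
      = {(lam, mu, l). lam \<le> 1/2 \<and> \<bar>mu\<bar> = l \<and> l > 0 \<and>
           (l = 1 - lam + sqrt (1 - 2 * lam) \<or> l = 1 - lam - sqrt (1 - 2 * lam))}
   \<and>
   (\<forall>lam mu l h. lam \<le> 1/2 \<and> \<bar>mu\<bar> = l \<and> l = 1 - lam + sqrt (1 - 2 * lam) \<and>
        order l (Fpoly 1 lam mu l h) \<ge> 3 \<longrightarrow>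
      l > 0 \<and> third_deriv_at (Fpoly 1 lam mu l h) l = 6 * sqrt (1 - 2 * lam) \<and>
      (lam < 1/2 \<longrightarrow> third_deriv_at (Fpoly 1 lam mu l h) l > 0))
   \<and>
   (\<forall>lam mu l h. lam \<le> 1/2 \<and> \<bar>mu\<bar> = l \<and> l = 1 - lam - sqrt (1 - 2 * lam) \<and> l > 0 \<and>
        order l (Fpoly 1 lam mu l h) \<ge> 3 \<longrightarrow>
      lam \<noteq> 0 \<and> third_deriv_at (Fpoly 1 lam mu l h) l = - 6 * sqrt (1 - 2 * lam) \<and>
      (lam < 1/2 \<longrightarrow> third_deriv_at (Fpoly 1 lam mu l h) l < 0))
   \<and>
   (\<forall>mu h. \<bar>mu\<bar> = 1/2 \<longrightarrow> order (1/2) (Fpoly 1 (1/2) mu (1/2) h) \<ge> 3 \<longrightarrow>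
      third_deriv_at (Fpoly 1 (1/2) mu (1/2) h) (1/2) = 0 \<and>
      order (1/2) (Fpoly 1 (1/2) mu (1/2) h) = 4)"
  apply (intro conjI)
  subgoal
    by (auto simp: poly_Fpoly_of_order_ge_3 third_deriv_at_Fpoly)
      (auto simp: order_Fpoly_ge_3_at_origin_iff)
  subgoal
    by (auto simp: poly_Fpoly_of_order_ge_3 third_deriv_at_Fpoly)
      (auto simp: order_Fpoly_ge_3_at_tip_iff)
  subgoal
    by (simp add: ex_order_Fpoly_at_Rmin_eq_4_iff)
  subgoal
    by (auto simp: order_Fpoly_ge_3_at_origin_iff)
  subgoal
    by (simp add: third_deriv_at_Fpoly)
  subgoal
    using ex_order_Fpoly_ge_3_at_tip_kappa_1_iff by fastforce
  subgoal
    by (auto simp: third_deriv_at_Fpoly add_pos_nonneg)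
  subgoal
    by (auto simp: third_deriv_at_Fpoly)
  subgoal
    by (simp add: third_deriv_at_Fpoly order_Fpoly_eq_4_iff)
  done

end
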